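(* Let $\mathbf A=[\mathbf a_1\ \cdots\ \mathbf a_n]\in\mathbb R^{m\times n}$, let $\mathbf x^0\in\mathbb R^n$ and $\mathcal S:=\mathrm{supp}(\mathbf x^0)$. Suppose $\mathbf A_{\mathcal S}^\top\mathbf A_{\mathcal S}$ is invertible and $$\|(\mathbf A_{\mathcal S}^\top\mathbf A_{\mathcal S})^{-1}\|_2\le 2,\qquad \max_{i\in\mathcal S^c}\|\mathbf A_{\mathcal S}^\top\mathbf a_i\|_2\le 1,$$ and there exists $\mathbf y\in\mathbb R^m$ such that $\mathbf v=\mathbf A^\top\mathbf y$ satisfies $$\|\mathbf v_{\mathcal S}-\mathrm{sign}(\mathbf x^0_{\mathcal S})\|_2\le 1/4,\qquad \|\mathbf v_{\mathcal S^c}\|_\infty\le 1/4.$$ Then for every $\alpha>0$ with $\alpha\ge 8\|\mathbf x^0\|_2$, $\mathbf x^0$ is the unique solution of problem (P2) with $\mathbf b=\mathbf A\mathbf x^0$.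
   Context: Problem (P2) is $\min_{\mathbf x}\{\|\mathbf x\|_1+\frac{1}{2\alpha}\|\mathbf x\|_2^2:\ \mathbf A\mathbf x=\mathbf b\}$. $\mathbf A_{\mathcal S}$ is the submatrix of columns of $\mathbf A$ indexed by $\mathcal S$; $\mathbf v_{\mathcal S}$ is the restriction of $\mathbf v$ to $\mathcal S$; $\mathrm{sign}$ acts componentwise; $\|\cdot\|_2$ on matrices is the spectral norm. *)

theory Defs
  imports "HOL-Analysis.Analysis"
begin

definition supp_vec :: "real ^ 'n \<Rightarrow> 'n set" where
  "supp_vec x = {i. x $ i \<noteq> 0}"

text \<open>Gram matrix of the column submatrix: (A_S^T A_S) restricted to S x S,
  entry (i,j) = a_i \<bullet> a_j for i,j in S.\<close>
definition gram_sub :: "real ^ 'n ^ 'm \<Rightarrow> 'n \<Rightarrow> 'n \<Rightarrow> real" where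
  "gram_sub A i j = column i A \<bullet> column j A"

definition is_inverse_on :: "'i set \<Rightarrow> ('i \<Rightarrow> 'i \<Rightarrow> real) \<Rightarrow> ('i \<Rightarrow> 'i \<Rightarrow> real) \<Rightarrow> bool" where
  "is_inverse_on S G H \<longleftrightarrow>
     (\<forall>i\<in>S. \<forall>j\<in>S. (\<Sum>k\<in>S. H i k * G k j) = (if i = j then 1 else 0)) \<and>
     (\<forall>i\<in>S. \<forall>j\<in>S. (\<Sum>k\<in>S. G i k * H k j) = (if i = j then 1 else 0))"

definition spec_norm_on :: "'i set \<Rightarrow> ('i \<Rightarrow> 'i \<Rightarrow> real) \<Rightarrow> real" where
  "spec_norm_on S M = Sup {sqrt (\<Sum>i\<in>S. (\<Sum>j\<in>S. M i j * u j)\<^sup>2) | u. (\<Sum>j\<in>S. (u j)\<^sup>2) \<le> 1}"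

definition P2_obj :: "real \<Rightarrow> real ^ 'n \<Rightarrow> real" where
  "P2_obj \<alpha> x = (\<Sum>i\<in>UNIV. \<bar>x $ i\<bar>) + 1 / (2 * \<alpha>) * (norm x)\<^sup>2"

definition P2_solutions :: "real ^ 'n ^ 'm \<Rightarrow> real ^ 'm \<Rightarrow> real \<Rightarrow> (real ^ 'n) set" where
  "P2_solutions A b \<alpha> =
     {x. A *v x = b \<and> (\<forall>z. A *v z = b \<longrightarrow> P2_obj \<alpha> x \<le> P2_obj \<alpha> z)}"

end

theory Submission imports Defs begin

(* The proof is a dual-certificate argument.
   (1) Optimality: if some w in the range of A^T satisfies w_i = sgn(x0_i) + x0_i/alpha
       on S = supp x0 and |w_i| <= 1 off S, then w - x0/alpha is a subgradient of the
       l1 norm at x0 orthogonal to ker A, and strong convexity of the quadratic term gives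
       obj z >= obj x0 + |z - x0|^2/(2 alpha) for every feasible z; hence x0 is the unique
       minimiser.
   (2) Construction: the inexact certificate v = A^T y is corrected to an exact one by
       adding A^T u with u = A_S c, c = (A_S^T A_S)^{-1} e, where e is the defect of v on S.
       On S the correction cancels the defect exactly; off S it is bounded by Cauchy-Schwarz,
       using |c|_2 <= 2 |e|_2 <= 2 (1/8 + 1/4) and the coherence bound |A_S^T a_i|_2 <= 1.
   Before these two steps we collect facts on the spectral norm, the l2 norm of a
   restriction and the subgradient inequality of the absolute value. *)

lemma L2_set_apply_le_spec_norm_on:
  fixes H :: "'i \<Rightarrow> 'i \<Rightarrow> real"
  assumes unit: "L2_set u S \<le> 1"
  shows "L2_set (\<lambda>i. \<Sum>j\<in>S. H i j * u j) S \<le> spec_norm_on S H"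
proof -
  define X where "X = {sqrt (\<Sum>i\<in>S. (\<Sum>j\<in>S. H i j * u j)\<^sup>2) | u. (\<Sum>j\<in>S. (u j)\<^sup>2) \<le> 1}"
  define B where "B = sqrt (\<Sum>i\<in>S. (L2_set (H i) S)\<^sup>2)"
  have "x \<le> B" if "x \<in> X" for x
  proof -
    from that obtain u where x: "x = sqrt (\<Sum>i\<in>S. (\<Sum>j\<in>S. H i j * u j)\<^sup>2)"
      and u: "(\<Sum>j\<in>S. (u j)\<^sup>2) \<le> 1" unfolding X_def by auto
    have "\<bar>\<Sum>j\<in>S. H i j * u j\<bar> \<le> L2_set (H i) S" for i
    proof -
      have "\<bar>\<Sum>j\<in>S. H i j * u j\<bar> \<le> (\<Sum>j\<in>S. \<bar>H i j\<bar> * \<bar>u j\<bar>)"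
        by (metis (no_types, lifting) abs_mult sum.cong sum_abs)
      also have "\<dots> \<le> L2_set (H i) S * L2_set u S" by (rule L2_set_mult_ineq)
      also have "\<dots> \<le> L2_set (H i) S"
        using u by (intro mult_left_le) (simp_all add: L2_set_def sum_nonneg)
      finally show ?thesis .
    qed
    hence "(\<Sum>j\<in>S. H i j * u j)\<^sup>2 \<le> (L2_set (H i) S)\<^sup>2" for i
      by (metis abs_ge_zero power2_abs power_mono)
    thus ?thesis unfolding x B_def by (intro real_sqrt_le_mono sum_mono)
  qed
  hence "bdd_above X" by (auto simp: bdd_above_def)
  moreover have "L2_set (\<lambda>i. \<Sum>j\<in>S. H i j * u j) S \<in> X"
    using unit unfolding X_def L2_set_def by auto
  ultimately show ?thesis unfolding spec_norm_on_def X_def[symmetric] by (auto intro: cSup_upper)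
qed

text \<open>By homogeneity, a spectral norm bound K bounds the amplification of every vector.\<close>
lemma L2_set_apply_le_spec_norm_on_mult:
  fixes H :: "'i \<Rightarrow> 'i \<Rightarrow> real"
  assumes fin: "finite S" and sp: "spec_norm_on S H \<le> K"
  shows "L2_set (\<lambda>i. \<Sum>j\<in>S. H i j * e j) S \<le> K * L2_set e S"
proof (cases "L2_set e S = 0")
  case True
  hence "\<forall>i\<in>S. (\<Sum>j\<in>S. H i j * e j) = 0" using L2_set_eq_0_iff[OF fin] by simp
  thus ?thesis using True by (simp add: L2_set_0')
next
  case False
  define r where "r = L2_set e S"
  have r: "r > 0" using False L2_set_nonneg[of e S] unfolding r_def by linarith
  have "L2_set (\<lambda>j. e j * (1/r)) S = 1"
    using L2_set_left_distrib[of "1/r" e S] r by (simp add: r_def)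
  hence "L2_set (\<lambda>i. \<Sum>j\<in>S. H i j * (e j * (1/r))) S \<le> K"
    using L2_set_apply_le_spec_norm_on[where u = "\<lambda>j. e j * (1/r)" and H = H and S = S] sp by simp
  moreover have "L2_set (\<lambda>i. \<Sum>j\<in>S. H i j * (e j * (1/r))) S
                 = L2_set (\<lambda>i. \<Sum>j\<in>S. H i j * e j) S / r"
    using L2_set_left_distrib[of "1/r" "\<lambda>i. \<Sum>j\<in>S. H i j * e j" S] r
    by (simp add: sum_distrib_right sum_divide_distrib mult_ac)
  ultimately show ?thesis using r by (simp add: r_def divide_le_eq mult.commute)
qed

lemma L2_set_component_le_norm:
  fixes x :: "real ^ 'n"
  shows "L2_set (\<lambda>i. x $ i) S \<le> norm x"
proof -
  have "(\<Sum>i\<in>S. (x $ i)\<^sup>2) \<le> (\<Sum>i\<in>UNIV. (x $ i)\<^sup>2)" by (rule sum_mono2) auto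
  thus ?thesis unfolding L2_set_def norm_vec_def by simp
qed

lemma transpose_mult_component:
  fixes A :: "real ^ 'n ^ 'm"
  shows "(transpose A *v u) $ i = column i A \<bullet> u"
  by (simp add: matrix_vector_mult_def transpose_def column_def inner_vec_def mult.commute)

lemma abs_add_ge_sgn_mult: "\<bar>(x::real) + h\<bar> - \<bar>x\<bar> \<ge> sgn x * h"
  by (cases "x > 0"; cases "x < 0") (auto simp: sgn_if abs_if)

text \<open>An exact dual certificate: the optimality condition of (P2) at x0,
  i.e. w - x0/\<alpha> lies in the subdifferential of the l1 norm at x0.\<close>
definition dual_certificate :: "real \<Rightarrow> real ^ 'n \<Rightarrow> real ^ 'n \<Rightarrow> bool" where
  "dual_certificate \<alpha> x0 w \<longleftrightarrow>
     (\<forall>i\<in>supp_vec x0. w $ i = sgn (x0 $ i) + x0 $ i / \<alpha>) \<and>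
     (\<forall>i\<in>- supp_vec x0. \<bar>w $ i\<bar> \<le> 1)"

lemma l1_increment_ge_certificate:
  fixes x0 h w :: "real ^ 'n"
  assumes "dual_certificate \<alpha> x0 w"
  shows "(\<Sum>i\<in>UNIV. \<bar>x0 $ i + h $ i\<bar>) - (\<Sum>i\<in>UNIV. \<bar>x0 $ i\<bar>) \<ge> w \<bullet> h - (x0 \<bullet> h) / \<alpha>"
proof -
  have "\<bar>x0 $ i + h $ i\<bar> - \<bar>x0 $ i\<bar> \<ge> (w $ i - x0 $ i / \<alpha>) * h $ i" for i
  proof (cases "i \<in> supp_vec x0")
    case True
    thus ?thesis using assms abs_add_ge_sgn_mult[of "x0 $ i" "h $ i"]
      unfolding dual_certificate_def by simp
  next
    case False
    hence "x0 $ i = 0" and "\<bar>w $ i\<bar> \<le> 1" using assms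
      unfolding supp_vec_def dual_certificate_def by auto
    moreover have "w $ i * h $ i \<le> \<bar>w $ i\<bar> * \<bar>h $ i\<bar>" by (metis abs_ge_self abs_mult)
    ultimately show ?thesis by (simp add: mult_left_le_one_le order_trans)
  qed
  hence "(\<Sum>i\<in>UNIV. (w $ i - x0 $ i / \<alpha>) * h $ i)
         \<le> (\<Sum>i\<in>UNIV. \<bar>x0 $ i + h $ i\<bar> - \<bar>x0 $ i\<bar>)" by (rule sum_mono)
  thus ?thesis
    by (simp add: inner_vec_def left_diff_distrib sum_subtractf sum_divide_distrib)
qed

text \<open>A certificate in the range of A^T yields a quadratic growth bound of the
  objective on the feasible set; this is where strong convexity of (P2) enters.\<close>
lemma certificate_quadratic_growth:
  fixes A :: "real ^ 'n ^ 'm"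
  assumes pos: "\<alpha> > 0" and cert: "dual_certificate \<alpha> x0 (transpose A *v y)"
    and feas: "A *v z = A *v x0"
  shows "P2_obj \<alpha> x0 + (norm (z - x0))\<^sup>2 / (2 * \<alpha>) \<le> P2_obj \<alpha> z"
proof -
  define h where "h = z - x0"
  have z: "z = x0 + h" unfolding h_def by simp
  have "A *v h = 0" unfolding h_def using feas by (simp add: matrix_vector_mult_diff_distrib)
  hence orth: "(transpose A *v y) \<bullet> h = 0"
    unfolding transpose_matrix_vector dot_lmul_matrix by simp
  have l1: "(\<Sum>i\<in>UNIV. \<bar>z $ i\<bar>) - (\<Sum>i\<in>UNIV. \<bar>x0 $ i\<bar>) \<ge> - (x0 \<bullet> h) / \<alpha>"
    using l1_increment_ge_certificate[OF cert, of h] orth unfolding z by simp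
  have "(norm z)\<^sup>2 = (norm x0)\<^sup>2 + 2 * (x0 \<bullet> h) + (norm h)\<^sup>2"
    unfolding z power2_norm_eq_inner by (simp add: inner_add inner_commute)
  hence l2: "1 / (2 * \<alpha>) * (norm z)\<^sup>2 - 1 / (2 * \<alpha>) * (norm x0)\<^sup>2
             = (x0 \<bullet> h) / \<alpha> + (norm h)\<^sup>2 / (2 * \<alpha>)"
    using pos by (simp add: field_simps)
  show ?thesis using l1 l2 unfolding P2_obj_def h_def by linarith
qed

lemma certificate_unique_solution:
  fixes A :: "real ^ 'n ^ 'm"
  assumes pos: "\<alpha> > 0" and cert: "dual_certificate \<alpha> x0 (transpose A *v y)"
  shows "P2_solutions A (A *v x0) \<alpha> = {x0}"
proof -
  have growth: "P2_obj \<alpha> x0 + (norm (z - x0))\<^sup>2 / (2 * \<alpha>) \<le> P2_obj \<alpha> z"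
    if "A *v z = A *v x0" for z
    using certificate_quadratic_growth[OF pos cert that] .
  have "P2_obj \<alpha> x0 \<le> P2_obj \<alpha> z" if "A *v z = A *v x0" for z
    using growth[OF that] pos by (smt (verit) divide_nonneg_pos zero_le_power2)
  hence "x0 \<in> P2_solutions A (A *v x0) \<alpha>" unfolding P2_solutions_def by simp
  moreover have "x = x0" if "x \<in> P2_solutions A (A *v x0) \<alpha>" for x
  proof -
    from that have "A *v x = A *v x0" and "P2_obj \<alpha> x \<le> P2_obj \<alpha> x0"
      unfolding P2_solutions_def by auto
    hence "(norm (x - x0))\<^sup>2 / (2 * \<alpha>) \<le> 0" using growth by fastforce
    thus "x = x0" using pos by (simp add: divide_le_0_iff)
  qed
  ultimately show ?thesis by blast
qed

lemma gram_inverse_interpolates: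
  fixes A :: "real ^ 'n ^ 'm"
  assumes Hinv: "is_inverse_on S (gram_sub A) H" and iS: "i \<in> S"
  shows "(transpose A *v (\<Sum>k\<in>S. (\<Sum>j\<in>S. H k j * e j) *\<^sub>R column k A)) $ i = e i"
proof -
  have "(transpose A *v (\<Sum>k\<in>S. (\<Sum>j\<in>S. H k j * e j) *\<^sub>R column k A)) $ i
        = (\<Sum>k\<in>S. \<Sum>j\<in>S. gram_sub A i k * H k j * e j)"
    unfolding transpose_mult_component gram_sub_def
    by (simp add: inner_sum_right sum_distrib_left mult_ac)
  also have "\<dots> = (\<Sum>j\<in>S. (\<Sum>k\<in>S. gram_sub A i k * H k j) * e j)"
    by (subst sum.swap) (simp add: sum_distrib_right)
  also have "\<dots> = (\<Sum>j\<in>S. if i = j then e j else 0)"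
    using Hinv iS unfolding is_inverse_on_def by (intro sum.cong) auto
  also have "\<dots> = e i" using iS by simp
  finally show ?thesis .
qed

lemma correction_off_support_bound:
  fixes A :: "real ^ 'n ^ 'm"
  shows "\<bar>(transpose A *v (\<Sum>k\<in>S. c k *\<^sub>R column k A)) $ i\<bar>
         \<le> L2_set c S * L2_set (\<lambda>k. column k A \<bullet> column i A) S"
proof -
  have "\<bar>(transpose A *v (\<Sum>k\<in>S. c k *\<^sub>R column k A)) $ i\<bar>
        = \<bar>\<Sum>k\<in>S. c k * (column k A \<bullet> column i A)\<bar>"
    unfolding transpose_mult_component by (simp add: inner_sum_right inner_commute)
  also have "\<dots> \<le> (\<Sum>k\<in>S. \<bar>c k\<bar> * \<bar>column k A \<bullet> column i A\<bar>)"
    by (metis (no_types, lifting) abs_mult sum.cong sum_abs)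
  also have "\<dots> \<le> L2_set c S * L2_set (\<lambda>k. column k A \<bullet> column i A) S"
    by (rule L2_set_mult_ineq)
  finally show ?thesis .
qed

lemma exact_certificate_exists:
  fixes A :: "real ^ 'n ^ 'm" and x0 :: "real ^ 'n"
  defines "S \<equiv> supp_vec x0"
  assumes Hinv: "is_inverse_on S (gram_sub A) H" and Hnorm: "spec_norm_on S H \<le> 2"
    and coh: "\<forall>i\<in>- S. L2_set (\<lambda>j. column j A \<bullet> column i A) S \<le> 1"
    and near_sgn: "L2_set (\<lambda>i. (transpose A *v y) $ i - sgn (x0 $ i)) S \<le> 1/4"
    and small_off: "\<forall>i\<in>- S. \<bar>(transpose A *v y) $ i\<bar> \<le> 1/4"
    and pos: "\<alpha> > 0" and large: "\<alpha> \<ge> 8 * norm x0"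
  shows "\<exists>y'. dual_certificate \<alpha> x0 (transpose A *v y')"
proof -
  define v where "v = transpose A *v y"
  define e where "e i = x0 $ i / \<alpha> + (sgn (x0 $ i) - v $ i)" for i
  define c where "c k = (\<Sum>j\<in>S. H k j * e j)" for k
  define u where "u = (\<Sum>k\<in>S. c k *\<^sub>R column k A)"
  have w: "transpose A *v (y + u) = v + transpose A *v u"
    unfolding v_def by (simp add: matrix_vector_right_distrib)
  have "L2_set (\<lambda>i. x0 $ i / \<alpha>) S = L2_set (\<lambda>i. x0 $ i) S * (1/\<alpha>)"
    using L2_set_left_distrib[of "1/\<alpha>" "\<lambda>i. x0 $ i" S] pos by simp
  also have "\<dots> \<le> norm x0 * (1/\<alpha>)"
    using L2_set_component_le_norm pos by (intro mult_right_mono) auto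
  also have "\<dots> \<le> 1/8" using large pos by (simp add: field_simps)
  finally have "L2_set (\<lambda>i. x0 $ i / \<alpha>) S \<le> 1/8" .
  moreover have "L2_set e S \<le> L2_set (\<lambda>i. x0 $ i / \<alpha>) S + L2_set (\<lambda>i. sgn (x0 $ i) - v $ i) S"
    unfolding e_def by (rule L2_set_triangle_ineq)
  moreover have "L2_set (\<lambda>i. sgn (x0 $ i) - v $ i) S = L2_set (\<lambda>i. v $ i - sgn (x0 $ i)) S"
    unfolding L2_set_def by (simp add: power2_commute)
  ultimately have "L2_set e S \<le> 3/8" using near_sgn unfolding v_def by simp
  hence c_small: "L2_set c S \<le> 3/4"
    using L2_set_apply_le_spec_norm_on_mult[OF _ Hnorm, of e] unfolding c_def by simp
  have "(transpose A *v (y + u)) $ i = sgn (x0 $ i) + x0 $ i / \<alpha>" if "i \<in> S" for i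
  proof -
    have "(transpose A *v u) $ i = e i"
      unfolding u_def c_def by (rule gram_inverse_interpolates[OF Hinv that])
    thus ?thesis unfolding w vector_add_component e_def by simp
  qed
  moreover have "\<bar>(transpose A *v (y + u)) $ i\<bar> \<le> 1" if "i \<in> - S" for i
  proof -
    have "L2_set c S * L2_set (\<lambda>k. column k A \<bullet> column i A) S \<le> 3/4 * 1"
      using c_small coh that by (intro mult_mono) auto
    hence "\<bar>(transpose A *v u) $ i\<bar> \<le> 3/4"
      using correction_off_support_bound[of A c S i] unfolding u_def by simp
    moreover have "\<bar>v $ i\<bar> \<le> 1/4" using small_off that unfolding v_def by blast
    ultimately show ?thesis unfolding w vector_add_component by linarith
  qed
  ultimately show ?thesis unfolding dual_certificate_def S_def by blast
qed

theorem mainTheorem7: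
  fixes A :: "real ^ 'n ^ 'm" and x0 :: "real ^ 'n"
  defines "S \<equiv> supp_vec x0"
  assumes inv: "\<exists>H. is_inverse_on S (gram_sub A) H \<and> spec_norm_on S H \<le> 2"
    and coh: "\<forall>i\<in>- S. sqrt (\<Sum>j\<in>S. (column j A \<bullet> column i A)\<^sup>2) \<le> 1"
    and cert: "\<exists>y :: real ^ 'm. let v = transpose A *v y in
                 sqrt (\<Sum>i\<in>S. (v $ i - sgn (x0 $ i))\<^sup>2) \<le> 1/4 \<and>
                 (\<forall>i\<in>- S. \<bar>v $ i\<bar> \<le> 1/4)"
  shows "\<forall>\<alpha>::real. \<alpha> > 0 \<and> \<alpha> \<ge> 8 * norm x0 \<longrightarrow> P2_solutions A (A *v x0) \<alpha> = {x0}"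
proof (intro allI impI)
  fix \<alpha> :: real
  assume \<alpha>: "\<alpha> > 0 \<and> \<alpha> \<ge> 8 * norm x0"
  obtain H where "is_inverse_on S (gram_sub A) H" and "spec_norm_on S H \<le> 2"
    using inv by blast
  moreover obtain y :: "real ^ 'm" where
    "L2_set (\<lambda>i. (transpose A *v y) $ i - sgn (x0 $ i)) S \<le> 1/4"
    and "\<forall>i\<in>- S. \<bar>(transpose A *v y) $ i\<bar> \<le> 1/4"
    using cert by (auto simp: Let_def L2_set_def)
  moreover have "\<forall>i\<in>- S. L2_set (\<lambda>j. column j A \<bullet> column i A) S \<le> 1"
    using coh by (simp add: L2_set_def)
  ultimately obtain y' where "dual_certificate \<alpha> x0 (transpose A *v y')"
    using exact_certificate_exists \<alpha> unfolding S_def by blast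
  thus "P2_solutions A (A *v x0) \<alpha> = {x0}"
    using certificate_unique_solution \<alpha> by blast
qed

end
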